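(* Let $T$ be a first-order theory over $\Sigma$ and $\varphi$ a sentence over $\Sigma$ such that $T\models\varphi$. Then $\mathrm{Opt}_\varphi$ is a monotone propagator for $T$.
   Context: Vocabularies are finite sets of predicate symbols. Truth values $\mathbf{t},\mathbf{f},\mathbf{u},\mathbf{i}$ with precision order $\mathbf{u} \le_p \mathbf{t} \le_p \mathbf{i}$, $\mathbf{u} \le_p \mathbf{f} \le_p \mathbf{i}$ ($\mathbf{t},\mathbf{f}$ incomparable). A four-valued $\Sigma$-structure $\tilde I$ has domain $D$ and assigns to each $P/n\in\Sigma$ a function $P^{\tilde I}:D^n\to\{\mathbf{t},\mathbf{f},\mathbf{u},\mathbf{i}\}$; two-valued structures are identified with ordinary structures. On structures with a fixed domain, $\le_p$ is pointwise; $\mathrm{glb}_{\le_p}$ is the greatest lower bound (glb of the empty set: all $\mathbf{i}$). For a sentence $\varphi$, $\mathrm{Opt}_\varphi(\tilde I)=\mathrm{glb}_{\le_p}\{M\mid M\text{ two-valued},\tilde I\le_p M, M\models\varphi\}$. A propagator for $T$ is a map $O$ on four-valued $\Sigma$-structures with (i) $\tilde I\le_p O(\tilde I)$ and (ii) $O(\tilde I)\le_p M$ for every two-valued model $M$ of $T$ with $\tilde I\le_p M$; it is monotone if $\tilde I\le_p\tilde J$ implies $O(\tilde I)\le_p O(\tilde J)$. *)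

theory Defs
  imports Main
begin

datatype tv = TT | FF | UU | II

fun le_tv :: "tv \<Rightarrow> tv \<Rightarrow> bool" where
  "le_tv UU _ = True"
| "le_tv _ II = True"
| "le_tv TT TT = True"
| "le_tv FF FF = True"
| "le_tv _ _ = False"

text \<open>Greatest lower bound w.r.t. the precision order (glb of the empty set is II).\<close>
definition glb_tv :: "tv set \<Rightarrow> tv" where
  "glb_tv S = (THE g. (\<forall>x\<in>S. le_tv g x) \<and> (\<forall>g'. (\<forall>x\<in>S. le_tv g' x) \<longrightarrow> le_tv g' g))"

text \<open>A vocabulary is a finite set of predicate symbols of type 'p, with arities given by ar.
  Variables are natural numbers.\<close>

datatype 'p fm =
    Atom 'p "nat list"
  | Eq nat nat
  | Neg "'p fm"
  | Conj "'p fm" "'p fm"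
  | Disj "'p fm" "'p fm"
  | Ex nat "'p fm"
  | All nat "'p fm"

fun free_vars :: "'p fm \<Rightarrow> nat set" where
  "free_vars (Atom P xs) = set xs"
| "free_vars (Eq x y) = {x, y}"
| "free_vars (Neg \<phi>) = free_vars \<phi>"
| "free_vars (Conj \<phi> \<psi>) = free_vars \<phi> \<union> free_vars \<psi>"
| "free_vars (Disj \<phi> \<psi>) = free_vars \<phi> \<union> free_vars \<psi>"
| "free_vars (Ex x \<phi>) = free_vars \<phi> - {x}"
| "free_vars (All x \<phi>) = free_vars \<phi> - {x}"

fun wf_fm :: "'p set \<Rightarrow> ('p \<Rightarrow> nat) \<Rightarrow> 'p fm \<Rightarrow> bool" where
  "wf_fm \<Sigma> ar (Atom P xs) = (P \<in> \<Sigma> \<and> length xs = ar P)"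
| "wf_fm \<Sigma> ar (Eq x y) = True"
| "wf_fm \<Sigma> ar (Neg \<phi>) = wf_fm \<Sigma> ar \<phi>"
| "wf_fm \<Sigma> ar (Conj \<phi> \<psi>) = (wf_fm \<Sigma> ar \<phi> \<and> wf_fm \<Sigma> ar \<psi>)"
| "wf_fm \<Sigma> ar (Disj \<phi> \<psi>) = (wf_fm \<Sigma> ar \<phi> \<and> wf_fm \<Sigma> ar \<psi>)"
| "wf_fm \<Sigma> ar (Ex x \<phi>) = wf_fm \<Sigma> ar \<phi>"
| "wf_fm \<Sigma> ar (All x \<phi>) = wf_fm \<Sigma> ar \<phi>"

definition sentence :: "'p set \<Rightarrow> ('p \<Rightarrow> nat) \<Rightarrow> 'p fm \<Rightarrow> bool" where
  "sentence \<Sigma> ar \<phi> \<longleftrightarrow> wf_fm \<Sigma> ar \<phi> \<and> free_vars \<phi> = {}"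

text \<open>A four-valued structure with domain D interprets P by a map on tuples (lists of length
  ar P over D); values outside this region are irrelevant.\<close>
type_synonym ('p, 'd) str4 = "'p \<Rightarrow> 'd list \<Rightarrow> tv"

definition tuples :: "'d set \<Rightarrow> nat \<Rightarrow> 'd list set" where
  "tuples D n = {ds. length ds = n \<and> set ds \<subseteq> D}"

definition le_p :: "'p set \<Rightarrow> ('p \<Rightarrow> nat) \<Rightarrow> 'd set \<Rightarrow> ('p, 'd) str4 \<Rightarrow> ('p, 'd) str4 \<Rightarrow> bool" where
  "le_p \<Sigma> ar D I J \<longleftrightarrow> (\<forall>P\<in>\<Sigma>. \<forall>ds\<in>tuples D (ar P). le_tv (I P ds) (J P ds))"

definition two_valued :: "'p set \<Rightarrow> ('p \<Rightarrow> nat) \<Rightarrow> 'd set \<Rightarrow> ('p, 'd) str4 \<Rightarrow> bool" where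
  "two_valued \<Sigma> ar D M \<longleftrightarrow> (\<forall>P\<in>\<Sigma>. \<forall>ds\<in>tuples D (ar P). M P ds \<in> {TT, FF})"

fun sat :: "'d set \<Rightarrow> ('p, 'd) str4 \<Rightarrow> (nat \<Rightarrow> 'd) \<Rightarrow> 'p fm \<Rightarrow> bool" where
  "sat D M e (Atom P xs) = (M P (map e xs) = TT)"
| "sat D M e (Eq x y) = (e x = e y)"
| "sat D M e (Neg \<phi>) = (\<not> sat D M e \<phi>)"
| "sat D M e (Conj \<phi> \<psi>) = (sat D M e \<phi> \<and> sat D M e \<psi>)"
| "sat D M e (Disj \<phi> \<psi>) = (sat D M e \<phi> \<or> sat D M e \<psi>)"
| "sat D M e (Ex x \<phi>) = (\<exists>d\<in>D. sat D M (e(x := d)) \<phi>)"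
| "sat D M e (All x \<phi>) = (\<forall>d\<in>D. sat D M (e(x := d)) \<phi>)"

definition models :: "'d set \<Rightarrow> ('p, 'd) str4 \<Rightarrow> 'p fm \<Rightarrow> bool" where
  "models D M \<phi> \<longleftrightarrow> (\<forall>e. (\<forall>x. e x \<in> D) \<longrightarrow> sat D M e \<phi>)"

definition models_theory :: "'d set \<Rightarrow> ('p, 'd) str4 \<Rightarrow> 'p fm set \<Rightarrow> bool" where
  "models_theory D M T \<longleftrightarrow> (\<forall>\<psi>\<in>T. models D M \<psi>)"

definition entails :: "'p set \<Rightarrow> ('p \<Rightarrow> nat) \<Rightarrow> 'p fm set \<Rightarrow> 'p fm \<Rightarrow> 'd itself \<Rightarrow> bool" where
  "entails \<Sigma> ar T \<phi> _ \<longleftrightarrow>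
     (\<forall>(D::'d set) M. D \<noteq> {} \<longrightarrow> two_valued \<Sigma> ar D M \<longrightarrow> models_theory D M T \<longrightarrow> models D M \<phi>)"

definition Opt :: "'p set \<Rightarrow> ('p \<Rightarrow> nat) \<Rightarrow> 'd set \<Rightarrow> 'p fm \<Rightarrow> ('p, 'd) str4 \<Rightarrow> ('p, 'd) str4" where
  "Opt \<Sigma> ar D \<phi> I = (\<lambda>P ds. glb_tv {M P ds | M. two_valued \<Sigma> ar D M \<and> le_p \<Sigma> ar D I M \<and> models D M \<phi>})"

definition propagator :: "'p set \<Rightarrow> ('p \<Rightarrow> nat) \<Rightarrow> 'd set \<Rightarrow> 'p fm set \<Rightarrow> (('p, 'd) str4 \<Rightarrow> ('p, 'd) str4) \<Rightarrow> bool" where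
  "propagator \<Sigma> ar D T Op \<longleftrightarrow>
     (\<forall>I. le_p \<Sigma> ar D I (Op I) \<and>
          (\<forall>M. two_valued \<Sigma> ar D M \<longrightarrow> models_theory D M T \<longrightarrow> le_p \<Sigma> ar D I M \<longrightarrow> le_p \<Sigma> ar D (Op I) M))"

definition monotone_op :: "'p set \<Rightarrow> ('p \<Rightarrow> nat) \<Rightarrow> 'd set \<Rightarrow> (('p, 'd) str4 \<Rightarrow> ('p, 'd) str4) \<Rightarrow> bool" where
  "monotone_op \<Sigma> ar D Op \<longleftrightarrow> (\<forall>I J. le_p \<Sigma> ar D I J \<longrightarrow> le_p \<Sigma> ar D (Op I) (Op J))"

end

theory Submission
  imports Defs
begin

text \<open>Every model of \<open>\<phi>\<close> above \<open>I\<close> takes part in the glb defining \<open>Opt \<phi> I\<close>, and each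
  model of \<open>T\<close> is a model of \<open>\<phi>\<close>; hence \<open>Opt \<phi> I\<close> lies below every model of \<open>T\<close> above \<open>I\<close>.
  Every element of that glb lies above \<open>I\<close>, so \<open>I \<le>\<^sub>p Opt \<phi> I\<close>. Finally, enlarging \<open>I\<close>
  shrinks the set of models over which the glb is taken, which can only increase it.\<close>

lemma le_tv_trans: "le_tv a b \<Longrightarrow> le_tv b c \<Longrightarrow> le_tv a c"
  by (cases a; cases b; cases c) simp_all

lemma le_tv_antisym: "le_tv a b \<Longrightarrow> le_tv b a \<Longrightarrow> a = b"
  by (cases a; cases b) simp_all

lemma glb_tv_exists:
  "\<exists>g. (\<forall>x\<in>S. le_tv g x) \<and> (\<forall>g'. (\<forall>x\<in>S. le_tv g' x) \<longrightarrow> le_tv g' g)"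
proof (intro exI conjI allI impI ballI)
  let ?g = "if UU \<in> S \<or> TT \<in> S \<and> FF \<in> S then UU else if TT \<in> S then TT
            else if FF \<in> S then FF else II"
  show "le_tv ?g x" if "x \<in> S" for x
    using that by (cases x) auto
  show "le_tv g' ?g" if "\<forall>x\<in>S. le_tv g' x" for g'
    using that by (cases g') (auto elim: le_tv.elims)
qed

lemma glb_tv_is_glb:
  "(\<forall>x\<in>S. le_tv (glb_tv S) x) \<and> (\<forall>g. (\<forall>x\<in>S. le_tv g x) \<longrightarrow> le_tv g (glb_tv S))"
  unfolding glb_tv_def
  by (rule theI') (use glb_tv_exists le_tv_antisym in blast)

lemma glb_tv_lower: "x \<in> S \<Longrightarrow> le_tv (glb_tv S) x"
  using glb_tv_is_glb by blast

lemma glb_tv_greatest: "(\<And>x. x \<in> S \<Longrightarrow> le_tv g x) \<Longrightarrow> le_tv g (glb_tv S)"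
  using glb_tv_is_glb by blast

lemma glb_tv_antimono: "S \<subseteq> S' \<Longrightarrow> le_tv (glb_tv S') (glb_tv S)"
  by (blast intro: glb_tv_greatest glb_tv_lower)

lemma le_p_trans: "le_p \<Sigma> ar D I J \<Longrightarrow> le_p \<Sigma> ar D J K \<Longrightarrow> le_p \<Sigma> ar D I K"
  unfolding le_p_def by (blast intro: le_tv_trans)

lemma le_p_Opt: "le_p \<Sigma> ar D I (Opt \<Sigma> ar D \<phi> I)"
  unfolding le_p_def Opt_def by (auto intro!: glb_tv_greatest simp: le_p_def)

lemma Opt_le_model:
  assumes "two_valued \<Sigma> ar D M" and "le_p \<Sigma> ar D I M" and "models D M \<phi>"
  shows "le_p \<Sigma> ar D (Opt \<Sigma> ar D \<phi> I) M"
proof (unfold le_p_def, intro ballI)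
  fix P ds
  show "le_tv (Opt \<Sigma> ar D \<phi> I P ds) (M P ds)"
    unfolding Opt_def using assms by (blast intro: glb_tv_lower)
qed

lemma Opt_mono:
  assumes "le_p \<Sigma> ar D I J"
  shows "le_p \<Sigma> ar D (Opt \<Sigma> ar D \<phi> I) (Opt \<Sigma> ar D \<phi> J)"
proof (unfold le_p_def, intro ballI)
  fix P ds
  show "le_tv (Opt \<Sigma> ar D \<phi> I P ds) (Opt \<Sigma> ar D \<phi> J P ds)"
    unfolding Opt_def using le_p_trans [OF assms] by (blast intro: glb_tv_antimono)
qed

theorem proposition3p9:
  fixes \<Sigma> :: "'p set" and ar :: "'p \<Rightarrow> nat" and T :: "'p fm set" and \<phi> :: "'p fm"
    and D :: "'d set"
  assumes "finite \<Sigma>"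
    and "\<forall>\<psi>\<in>T. sentence \<Sigma> ar \<psi>"
    and "sentence \<Sigma> ar \<phi>"
    and "entails \<Sigma> ar T \<phi> TYPE('d)"
    and "D \<noteq> {}"
  shows "propagator \<Sigma> ar D T (Opt \<Sigma> ar D \<phi>) \<and> monotone_op \<Sigma> ar D (Opt \<Sigma> ar D \<phi>)"
proof
  have "models D M \<phi>" if "two_valued \<Sigma> ar D M" and "models_theory D M T" for M
    using assms(4,5) that unfolding entails_def by blast
  then show "propagator \<Sigma> ar D T (Opt \<Sigma> ar D \<phi>)"
    unfolding propagator_def by (blast intro: le_p_Opt Opt_le_model)
  show "monotone_op \<Sigma> ar D (Opt \<Sigma> ar D \<phi>)"
    unfolding monotone_op_def by (blast intro: Opt_mono)
qed

end
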